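(* For all $0\le i\le r$ and all $\beta\in\Gamma_{i-1}$, the following identity of rational functions holds: $\pi_{i+1}^{\beta}/\pi_i^{\beta}=Y_i^{L_i(\beta)}$ (here $L_i(\beta)\in\mathbb Z$).
   Context: Let $(K,v)$ be a valued field with non-trivial value group $\Gamma$; $\Gamma_{\mathbb Q}=\Gamma\otimes\mathbb Q$. Let $\phi_0,\dots,\phi_r\in K[x]$ be the key polynomials and $\gamma_0,\dots,\gamma_r\in\Gamma_{\mathbb Q}$ the values of a MacLane chain $\mu_{-\infty}\xrightarrow{\phi_0,\gamma_0}\mu_0\to\cdots\xrightarrow{\phi_r,\gamma_r}\mu_r$ of augmented valuations on $K[x]$. Put $\Gamma_{\mu_{-1}}=\Gamma$; then $\Gamma_{\mu_i}=\langle\Gamma_{\mu_{i-1}},\gamma_i\rangle$, $e_i=(\Gamma_{\mu_i}:\Gamma_{\mu_{i-1}})<\infty$, $h_i=e_i\gamma_i\in\Gamma_{\mu_{i-1}}$. Fix a finitely generated $\Gamma_{-1}\subseteq\Gamma$ with $h_i\in\Gamma_{-1}+\langle\gamma_0,\dots,\gamma_{i-1}\rangle$ for all $i$; $\Gamma_i=\langle\Gamma_{-1},\gamma_0,\dots,\gamma_i\rangle$ (free of common rank $n$, $h_i\in\Gamma_{i-1}$). Fix a $\mathbb Z$-basis $\iota_{0,1},\dots,\iota_{0,n}$ of $\Gamma_{-1}$; recursively, given the basis $\iota_{i,\cdot}$ of $\Gamma_{i-1}$, write $\gamma_i=\sum_j(h_{i,j}/e_{i,j})\iota_{i,j}$ (coprime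 integers, $e_{i,j}>0$), $e'_{i,1}=d_{i,1}=1$, $e'_{i,j}=e_{i,1}\cdots e_{i,j-1}/(d_{i,1}\cdots d_{i,j-1})$, $d_{i,j}=\gcd(e_{i,j},e'_{i,j})$ ($j>1$); let $\ell_{i,j},\ell'_{i,j}$ be the integers with $\ell_{i,j}h_{i,j}e'_{i,j}+\ell'_{i,j}e_{i,j}=d_{i,j}$, $0\le\ell_{i,j}<e_{i,j}/d_{i,j}$; $(\iota_{i+1,1}\cdots\iota_{i+1,n})=(\iota_{i,1}\cdots\iota_{i,n})Q_i$, $Q_i$ lower triangular with diagonal $d_{i,j}/e_{i,j}$ and $(m,j)$-entry $\ell_{i,j}e'_{i,j}h_{i,m}/e_{i,m}$ ($m>j$), a basis of $\Gamma_i$. Choose $\pi_{0,j}\in K^*$ with $v(\pi_{0,j})=\iota_{0,j}$; for $0\le i\le r$, $\pi_{i+1,j}=\big(\phi_i\pi_{i,1}^{-h_{i,1}/e_{i,1}}\cdots\pi_{i,j-1}^{-h_{i,j-1}/e_{i,j-1}}\big)^{\ell_{i,j}e'_{i,j}}\pi_{i,j}^{\ell'_{i,j}}$ (integer exponents). For $0\le i\le r+1$ and $\alpha=\sum_jn_j\iota_{i,j}\in\Gamma_{i-1}$ ($n_j\in\mathbb Z$), $\pi_i^\alpha=\prod_j\pi_{i,j}^{n_j}$ (note $\Gamma_{i-1}\subseteq\Gamma_i$, so $\pi_{i+1}^\beta$ is defined for $\beta\in\Gamma_{i-1}$); $Y_i=\phi_i^{e_i}\pi_i^{-h_i}$. Let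 $L_{i,j}=\ell_{i,j}\ell'_{i,j+1}\cdots\ell'_{i,n}$ and let $L_i\colon\Gamma_{i-1}\otimes\mathbb Q\to\mathbb Q$ be the $\mathbb Q$-linear map with $L_i(\iota_{i,j})=L_{i,j}$. *)

theory Defs
  imports "HOL-Computational_Algebra.Polynomial" "HOL-Computational_Algebra.Fraction_Field"
begin

text \<open>
The group Gamma_{-1} is identified with Z^n via its basis iota_{0,1..n};
all gamma_i lie in Gamma_{-1} (x) Q, so gamma_i is given by its rational coordinate
vector  gam i :: nat => rat  (indices 1..n) with respect to iota_{0,.}.
\<close>

text \<open>Gamma_{k-1} = Gamma_{-1} + <gamma_0,...,gamma_{k-1}>, in iota_0-coordinates.\<close>
definition inLat :: "nat \<Rightarrow> (nat \<Rightarrow> nat \<Rightarrow> rat) \<Rightarrow> nat \<Rightarrow> (nat \<Rightarrow> rat) \<Rightarrow> bool" where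
  "inLat n gam k v \<longleftrightarrow>
     (\<exists>a b :: nat \<Rightarrow> int. \<forall>j\<in>{1..n}. v j = of_int (a j) + (\<Sum>l<k. of_int (b l) * gam l j))"

text \<open>e_i = (Gamma_i : Gamma_{i-1}), the order of gamma_i modulo Gamma_{i-1}.\<close>
definition eidx :: "nat \<Rightarrow> (nat \<Rightarrow> nat \<Rightarrow> rat) \<Rightarrow> nat \<Rightarrow> nat" where
  "eidx n gam i = (LEAST k::nat. 0 < k \<and> inLat n gam i (\<lambda>j. of_nat k * gam i j))"

definition hnum :: "rat \<Rightarrow> int" where "hnum x = fst (quotient_of x)"
definition eden :: "rat \<Rightarrow> int" where "eden x = snd (quotient_of x)"

text \<open>e'_j (j >= 1): e'_1 = 1, e'_{j+1} = e'_j e_j / d_j, with d_1 = 1, d_j = gcd(e_j,e'_j).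
 This is e'_j = e_1...e_{j-1}/(d_1...d_{j-1}).\<close>
fun eprime :: "(nat \<Rightarrow> int) \<Rightarrow> nat \<Rightarrow> int" where
  "eprime e 0 = 1"
| "eprime e (Suc 0) = 1"
| "eprime e (Suc (Suc j)) =
     eprime e (Suc j) * e (Suc j) div (if j = 0 then 1 else gcd (e (Suc j)) (eprime e (Suc j)))"

definition dfac :: "(nat \<Rightarrow> int) \<Rightarrow> nat \<Rightarrow> int" where
  "dfac e j = (if j \<le> 1 then 1 else gcd (e j) (eprime e j))"

text \<open>Stage data, given x = coordinates of gamma_i in the basis iota_{i,.}:
 x j = h_{i,j}/e_{i,j}.\<close>
definition hh :: "(nat \<Rightarrow> rat) \<Rightarrow> nat \<Rightarrow> int" where "hh x j = hnum (x j)"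
definition ee :: "(nat \<Rightarrow> rat) \<Rightarrow> nat \<Rightarrow> int" where "ee x j = eden (x j)"
definition ep :: "(nat \<Rightarrow> rat) \<Rightarrow> nat \<Rightarrow> int" where "ep x j = eprime (ee x) j"
definition dd :: "(nat \<Rightarrow> rat) \<Rightarrow> nat \<Rightarrow> int" where "dd x j = dfac (ee x) j"

definition ellpair :: "(nat \<Rightarrow> rat) \<Rightarrow> nat \<Rightarrow> int \<times> int" where
  "ellpair x j = (THE (a, b). a * hh x j * ep x j + b * ee x j = dd x j
                       \<and> 0 \<le> a \<and> a < ee x j div dd x j)"
definition ell :: "(nat \<Rightarrow> rat) \<Rightarrow> nat \<Rightarrow> int" where "ell x j = fst (ellpair x j)"
definition ell' :: "(nat \<Rightarrow> rat) \<Rightarrow> nat \<Rightarrow> int" where "ell' x j = snd (ellpair x j)"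

text \<open>The matrix Q_i: (m,j)-entry; (iota_{i+1,.}) = (iota_{i,.}) Q_i.\<close>
definition Qm :: "(nat \<Rightarrow> rat) \<Rightarrow> nat \<Rightarrow> nat \<Rightarrow> rat" where
  "Qm x m j = (if m = j then of_int (dd x j) / of_int (ee x j)
               else if j < m then of_int (ell x j * ep x j) * x m else 0)"

definition Lcoef :: "nat \<Rightarrow> (nat \<Rightarrow> rat) \<Rightarrow> nat \<Rightarrow> int" where
  "Lcoef n x j = ell x j * (\<Prod>l\<in>{j<..n}. ell' x l)"

definition lsolve :: "nat \<Rightarrow> (nat \<Rightarrow> nat \<Rightarrow> rat) \<Rightarrow> (nat \<Rightarrow> rat) \<Rightarrow> nat \<Rightarrow> rat" where
  "lsolve n M b = (THE y. (\<forall>m\<in>{1..n}. (\<Sum>j\<in>{1..n}. M m j * y j) = b m)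
                         \<and> (\<forall>j. j \<notin> {1..n} \<longrightarrow> y j = 0))"

text \<open>gcoord n gam i k = coordinates of gamma_k in the basis iota_{i,.}.\<close>
fun gcoord :: "nat \<Rightarrow> (nat \<Rightarrow> nat \<Rightarrow> rat) \<Rightarrow> nat \<Rightarrow> nat \<Rightarrow> nat \<Rightarrow> rat" where
  "gcoord n gam 0 = (\<lambda>k j. if j \<in> {1..n} then gam k j else 0)"
| "gcoord n gam (Suc i) = (\<lambda>k. lsolve n (Qm (gcoord n gam i i)) (gcoord n gam i k))"

text \<open>pi_{i,j}.  Note (phi_i pi_{i,1}^{-h_1/e_1}...)^{l e'} has the integer exponents
 -l e' h_l / e_l (exact divisions).\<close>
fun piv :: "nat \<Rightarrow> (nat \<Rightarrow> nat \<Rightarrow> rat) \<Rightarrow> (nat \<Rightarrow> 'a::field) \<Rightarrow> (nat \<Rightarrow> 'a) \<Rightarrow> nat \<Rightarrow> nat \<Rightarrow> 'a" where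
  "piv n gam phi p0 0 j = p0 j"
| "piv n gam phi p0 (Suc i) j =
     (let x = gcoord n gam i i in
        phi i powi (ell x j * ep x j)
        * (\<Prod>l\<in>{1..<j}. piv n gam phi p0 i l powi (- (ell x j * ep x j * hh x l div ee x l)))
        * piv n gam phi p0 i j powi (ell' x j))"

text \<open>pi_i^alpha for alpha = sum_j c_j iota_{i,j}.\<close>
definition pipow :: "nat \<Rightarrow> (nat \<Rightarrow> nat \<Rightarrow> rat) \<Rightarrow> (nat \<Rightarrow> 'a::field) \<Rightarrow> (nat \<Rightarrow> 'a) \<Rightarrow> nat \<Rightarrow> (nat \<Rightarrow> int) \<Rightarrow> 'a" where
  "pipow n gam phi p0 i c = (\<Prod>j\<in>{1..n}. piv n gam phi p0 i j powi c j)"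

text \<open>Y_i = phi_i^{e_i} pi_i^{-h_i}; h_i = e_i gamma_i has iota_i-coordinates e_i h_{i,j}/e_{i,j}.\<close>
definition Yv :: "nat \<Rightarrow> (nat \<Rightarrow> nat \<Rightarrow> rat) \<Rightarrow> (nat \<Rightarrow> 'a::field) \<Rightarrow> (nat \<Rightarrow> 'a) \<Rightarrow> nat \<Rightarrow> 'a" where
  "Yv n gam phi p0 i =
     (let x = gcoord n gam i i; e = int (eidx n gam i) in
        phi i powi e * pipow n gam phi p0 i (\<lambda>j. - (e * hh x j div ee x j)))"

definition Lval :: "nat \<Rightarrow> (nat \<Rightarrow> nat \<Rightarrow> rat) \<Rightarrow> nat \<Rightarrow> (nat \<Rightarrow> int) \<Rightarrow> int" where
  "Lval n gam i c = (\<Sum>j\<in>{1..n}. c j * Lcoef n (gcoord n gam i i) j)"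

end

theory Submission
  imports Defs
begin

text \<open>
Both sides of the identity are Laurent monomials in \<open>\<phi>\<^sub>i\<close> and \<open>\<pi>\<^sub>i\<^sub>,\<^sub>1, \<dots>, \<pi>\<^sub>i\<^sub>,\<^sub>n\<close>, so it
suffices to compare exponents.  The matrix \<open>Q\<^sub>i\<close> is lower triangular, and back substitution gives
its inverse explicitly; the Bezout relations \<open>\<ell>\<^sub>j h\<^sub>j e'\<^sub>j + \<ell>'\<^sub>j e\<^sub>j = d\<^sub>j\<close> and
\<open>e'\<^sub>j\<^sub>+\<^sub>1 d\<^sub>j = e'\<^sub>j e\<^sub>j\<close> make the \<open>\<phi>\<^sub>i\<close>-exponent \<open>\<Sum>\<^sub>j \<ell>\<^sub>j e'\<^sub>j \<beta>'\<^sub>j\<close> of \<open>\<pi>\<^sub>i\<^sub>+\<^sub>1\<^sup>\<beta>'\<close>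
telescope to \<open>e'\<^sub>n\<^sub>+\<^sub>1 L\<^sub>i(\<beta>)\<close>, and the \<open>\<pi>\<^sub>i\<^sub>,\<^sub>l\<close>-exponent then differs from \<open>\<beta>\<^sub>l\<close> by
\<open>-e'\<^sub>n\<^sub>+\<^sub>1 (h\<^sub>l/e\<^sub>l) L\<^sub>i(\<beta>)\<close>.  It remains to see \<open>e\<^sub>i = e'\<^sub>n\<^sub>+\<^sub>1 = lcm(e\<^sub>1, \<dots>, e\<^sub>n)\<close>, the
common denominator of the coordinates of \<open>\<gamma>\<^sub>i\<close>; this uses that the \<open>\<iota>\<^sub>i\<^sub>,\<^sub>j\<close> form a basis of
\<open>\<Gamma>\<^sub>i\<^sub>-\<^sub>1\<close>, which follows by induction on \<open>i\<close> from the explicit inverse of \<open>Q\<^sub>i\<close>.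
\<close>

lemma prod_power_int_distrib:
  fixes f :: "_ \<Rightarrow> 'a::field"
  shows "(\<Prod>j\<in>A. f j) powi k = (\<Prod>j\<in>A. f j powi k)"
  by (induction A rule: infinite_finite_induct) (auto simp: power_int_mult_distrib)

lemma atLeastAtMost_split_at:
  fixes m n :: nat
  assumes "m \<in> {1..n}"
  shows "{1..n} = {1..<m} \<union> ({m} \<union> {m<..n})" and "{1..<m} \<inter> ({m} \<union> {m<..n}) = {}"
  using assms by auto

lemma sum_atLeastAtMost_split_at:
  fixes f :: "nat \<Rightarrow> 'a::comm_monoid_add"
  assumes "m \<in> {1..n}"
  shows "(\<Sum>j\<in>{1..n}. f j) = (\<Sum>j\<in>{1..<m}. f j) + f m + (\<Sum>j\<in>{m<..n}. f j)"
proof -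
  have "(\<Sum>j\<in>{1..n}. f j) = (\<Sum>j\<in>{1..<m}. f j) + (\<Sum>j\<in>{m} \<union> {m<..n}. f j)"
    unfolding atLeastAtMost_split_at(1)[OF assms]
    by (rule sum.union_disjoint) (simp, simp, fact atLeastAtMost_split_at(2)[OF assms])
  thus ?thesis by (simp add: add.assoc)
qed

lemma prod_atLeastAtMost_split_at:
  fixes f :: "nat \<Rightarrow> 'a::comm_monoid_mult"
  assumes "m \<in> {1..n}"
  shows "(\<Prod>j\<in>{1..n}. f j) = (\<Prod>j\<in>{1..<m}. f j) * f m * (\<Prod>j\<in>{m<..n}. f j)"
proof -
  have "(\<Prod>j\<in>{1..n}. f j) = (\<Prod>j\<in>{1..<m}. f j) * (\<Prod>j\<in>{m} \<union> {m<..n}. f j)"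
    unfolding atLeastAtMost_split_at(1)[OF assms]
    by (rule prod.union_disjoint) (simp, simp, fact atLeastAtMost_split_at(2)[OF assms])
  thus ?thesis by (simp add: mult.assoc)
qed

lemma bezout_normalized_ex1:
  fixes m k :: int
  assumes k: "0 < k" and cop: "coprime m k"
  shows "\<exists>!p. case p of (a, b) \<Rightarrow> a * m + b * k = 1 \<and> 0 \<le> a \<and> a < k"
proof -
  obtain u v where uv: "u * m + v * k = 1"
    using bezout_int[of m k] cop by auto
  define a where "a = u mod k"
  define b where "b = v + (u div k) * m"
  have ab: "a * m + b * k = 1"
  proof -
    have "r * m + (v + q * m) * k = (q * k + r) * m + v * k" for q r
      by (simp add: algebra_simps)
    from this[of "u mod k" "u div k"] show ?thesis
      unfolding a_def b_def using uv by simp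
  qed
  have a_range: "0 \<le> a" "a < k" using k by (auto simp: a_def)
  show ?thesis
  proof (rule ex1I[of _ "(a, b)"])
    fix p assume "case p of (a, b) \<Rightarrow> a * m + b * k = 1 \<and> 0 \<le> a \<and> a < k"
    then obtain a' b' where p: "p = (a', b')" and a'b': "a' * m + b' * k = 1" "0 \<le> a'" "a' < k"
      by (cases p) auto
    have "(a - a') * m = (b' - b) * k" using ab a'b'(1) by (simp add: algebra_simps)
    hence "k dvd (a - a') * m" by (metis dvd_triv_right)
    hence "k dvd a - a'" using cop by (simp add: coprime_commute coprime_dvd_mult_left_iff)
    moreover have "\<bar>a - a'\<bar> < k" using a'b' a_range by auto
    ultimately have "a = a'"
      using dvd_imp_le_int[of "a - a'" k] by fastforce
    moreover from this have "b * k = b' * k" using ab a'b'(1) by (metis add_left_cancel)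
    hence "b = b'" using k by simp
    ultimately show "p = (a, b)" using p by simp
  qed (use ab a_range in simp)
qed

lemma bezout_gcd_normalized_ex1:
  fixes h E e :: int
  assumes e: "0 < e" and "0 < E" and cop: "coprime h e"
  shows "\<exists>!p. case p of (a, b) \<Rightarrow> a * h * E + b * e = gcd e E \<and> 0 \<le> a \<and> a < e div gcd e E"
proof -
  define d where "d = gcd e E"
  have gcd_hE_e: "gcd (h * E) e = d"
    using gcd_mult_left_left_cancel[of e h E] cop by (simp add: d_def gcd.commute coprime_commute)
  have d: "0 < d" using e by (simp add: d_def)
  obtain k where ek: "e = d * k" unfolding d_def by (meson gcd_dvd1 dvdE)
  obtain m where hEm: "h * E = d * m" using gcd_hE_e by (metis gcd_dvd1 dvdE)
  have k: "0 < k" using ek e d by (simp add: zero_less_mult_iff)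
  have "coprime ((h * E) div gcd (h * E) e) (e div gcd (h * E) e)"
    by (rule div_gcd_coprime) (use e in auto)
  hence cop_mk: "coprime m k" using gcd_hE_e hEm ek d by simp
  have bezout_iff: "a * h * E + b * e = d \<longleftrightarrow> a * m + b * k = 1" for a b
  proof -
    have "a * h * E + b * e = d * (a * m + b * k)" using ek hEm by (simp add: algebra_simps)
    thus ?thesis using d by auto
  qed
  have "e div d = k" using ek d by simp
  hence "(case p of (a, b) \<Rightarrow> a * h * E + b * e = gcd e E \<and> 0 \<le> a \<and> a < e div gcd e E)
      \<longleftrightarrow> (case p of (a, b) \<Rightarrow> a * m + b * k = 1 \<and> 0 \<le> a \<and> a < k)" for p
    using bezout_iff by (cases p) (simp add: d_def)
  thus ?thesis using bezout_normalized_ex1[OF k cop_mk] by simp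
qed

text \<open>Throughout, \<open>x\<close> stands for the coordinate vector of \<open>\<gamma>\<^sub>i\<close> in the basis \<open>\<iota>\<^sub>i\<^sub>,\<^sub>.\<close>.\<close>

lemma ee_pos: "0 < ee x j"
  by (simp add: ee_def eden_def quotient_of_denom_pos')

lemma hh_ee_coprime: "coprime (hh x j) (ee x j)"
  by (simp add: hh_def ee_def hnum_def eden_def quotient_of_coprime)

lemma coord_eq_hh_div_ee: "x j = of_int (hh x j) / of_int (ee x j)"
  by (simp add: hh_def ee_def hnum_def eden_def quotient_of_div)

lemma ep_1 [simp]: "ep x (Suc 0) = 1"
  by (simp add: ep_def)

lemma dd_eq_gcd: "1 \<le> j \<Longrightarrow> dd x j = gcd (ee x j) (ep x j)"
  by (cases j) (auto simp: dd_def dfac_def ep_def)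

lemma ep_Suc: "1 \<le> j \<Longrightarrow> ep x (Suc j) = ep x j * ee x j div dd x j"
  by (cases j; cases "j - 1") (auto simp: ep_def dd_def dfac_def)

lemma dd_pos: "1 \<le> j \<Longrightarrow> 0 < dd x j"
  using ee_pos[of x j] by (simp add: dd_eq_gcd)

lemma dd_dvd_ee: "1 \<le> j \<Longrightarrow> dd x j dvd ee x j"
  by (simp add: dd_eq_gcd)

lemma dd_dvd_ep: "1 \<le> j \<Longrightarrow> dd x j dvd ep x j"
  by (simp add: dd_eq_gcd)

lemma ep_Suc_mult_dd: "1 \<le> j \<Longrightarrow> ep x (Suc j) * dd x j = ep x j * ee x j"
  by (simp add: ep_Suc dd_dvd_ee dvd_mult)

lemma ep_pos: "1 \<le> j \<Longrightarrow> 0 < ep x j"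
proof (induction j rule: dec_induct)
  case (step m)
  have "0 < ee x m div dd x m"
    using step(1) dd_dvd_ee dd_pos ee_pos by (simp add: pos_imp_zdiv_pos_iff zdvd_imp_le)
  moreover have "ep x (Suc m) = ep x m * (ee x m div dd x m)"
    using step(1) by (simp add: ep_Suc dd_dvd_ee div_mult_swap)
  ultimately show ?case using step by simp
qed simp

lemma ep_Suc_eq_lcm: "1 \<le> j \<Longrightarrow> ep x (Suc j) = lcm (ep x j) (ee x j)"
  using ep_pos[of "Suc j" x]
  by (simp add: lcm_gcd ep_Suc dd_eq_gcd gcd.commute)

lemma ep_dvd_iff: "1 \<le> j \<Longrightarrow> ep x j dvd K \<longleftrightarrow> (\<forall>l\<in>{1..<j}. ee x l dvd K)"
proof (induction j rule: dec_induct)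
  case (step m)
  have "{1..<Suc m} = insert m {1..<m}" using step(1) by auto
  thus ?case using step by (simp add: ep_Suc_eq_lcm conj_commute)
qed simp

lemma ee_dvd_ep: "1 \<le> l \<Longrightarrow> l < j \<Longrightarrow> ee x l dvd ep x j"
  using ep_dvd_iff[of j x "ep x j"] by simp

lemma ell_bezout: "1 \<le> j \<Longrightarrow> ell x j * hh x j * ep x j + ell' x j * ee x j = dd x j"
proof -
  assume j: "1 \<le> j"
  have "case ellpair x j of (a, b) \<Rightarrow>
      a * hh x j * ep x j + b * ee x j = dd x j \<and> 0 \<le> a \<and> a < ee x j div dd x j"
    unfolding ellpair_def dd_eq_gcd[OF j]
    by (rule theI'[OF bezout_gcd_normalized_ex1[OF ee_pos ep_pos[OF j] hh_ee_coprime]])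
  thus ?thesis by (cases "ellpair x j") (simp add: ell_def ell'_def)
qed

lemma ell_bezout_rat:
  "1 \<le> j \<Longrightarrow> (of_int (dd x j) :: rat) =
     of_int (ell x j) * of_int (hh x j) * of_int (ep x j) + of_int (ell' x j) * of_int (ee x j)"
  using ell_bezout[of j x] by (metis of_int_add of_int_mult)

lemma dd_div_ee_eq:
  "1 \<le> j \<Longrightarrow> of_int (dd x j) / of_int (ee x j) = of_int (ell' x j) + of_int (ell x j * ep x j) * x j"
  using ell_bezout_rat[of j x] ee_pos[of x j] by (simp add: coord_eq_hh_div_ee[of x j] field_simps)

lemma ep_Suc_rat:
  "1 \<le> j \<Longrightarrow> (of_int (ep x (Suc j)) :: rat) = of_int (ep x j) * of_int (ee x j) / of_int (dd x j)"
  using ep_Suc_mult_dd[of j x] dd_pos[of j x] by (simp add: field_simps) (metis of_int_mult)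

lemma of_int_mult_hh_div_ee:
  assumes "ee x l dvd N"
  shows "(of_int (N * hh x l div ee x l) :: rat) = of_int N * x l"
proof -
  obtain q where q: "N = ee x l * q" using assms by (auto elim: dvdE)
  have "N * hh x l div ee x l = q * hh x l" using ee_pos[of x l] by (simp add: q)
  thus ?thesis using ee_pos[of x l] by (simp add: coord_eq_hh_div_ee[of x l] q field_simps)
qed

section \<open>The inverse of \<open>Q\<^sub>i\<close>\<close>

text \<open>\<open>Lpart x \<beta> (n + 1)\<close> is \<open>L\<^sub>i(\<beta>)\<close>, and \<open>Qinv\<close> solves the triangular system \<open>Q\<^sub>i y = \<beta>\<close> by
back substitution: row \<open>m\<close> of \<open>Q\<^sub>i y\<close> is \<open>(d\<^sub>m/e\<^sub>m) y\<^sub>m + x\<^sub>m \<Sum>\<^sub>j\<^sub><\<^sub>m \<ell>\<^sub>j e'\<^sub>j y\<^sub>j\<close>, and the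
sum equals \<open>e'\<^sub>m Lpart x \<beta> m\<close>.\<close>

definition Lpart :: "(nat \<Rightarrow> rat) \<Rightarrow> (nat \<Rightarrow> rat) \<Rightarrow> nat \<Rightarrow> rat" where
  "Lpart x \<beta> m = (\<Sum>j\<in>{1..<m}. of_int (ell x j) * \<beta> j * (\<Prod>k\<in>{j<..<m}. of_int (ell' x k)))"

definition Qinv :: "nat \<Rightarrow> (nat \<Rightarrow> rat) \<Rightarrow> (nat \<Rightarrow> rat) \<Rightarrow> nat \<Rightarrow> rat" where
  "Qinv n x \<beta> m =
    (if m \<in> {1..n}
     then (of_int (ee x m) * \<beta> m - of_int (hh x m) * of_int (ep x m) * Lpart x \<beta> m) / of_int (dd x m)
     else 0)"

lemma Qinv_eq_0: "j \<notin> {1..n} \<Longrightarrow> Qinv n x \<beta> j = 0"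
  unfolding Qinv_def by (rule if_not_P)

lemma Lpart_Suc:
  assumes "1 \<le> m"
  shows "Lpart x \<beta> (Suc m) = of_int (ell' x m) * Lpart x \<beta> m + of_int (ell x m) * \<beta> m"
proof -
  have "(\<Prod>k\<in>{j<..<Suc m}. of_int (ell' x k) :: rat)
      = of_int (ell' x m) * (\<Prod>k\<in>{j<..<m}. of_int (ell' x k))" if "j < m" for j
  proof -
    have "{j<..<Suc m} = insert m {j<..<m}" using that by auto
    thus ?thesis by simp
  qed
  hence "(\<Sum>j\<in>{1..<m}. of_int (ell x j) * \<beta> j * (\<Prod>k\<in>{j<..<Suc m}. of_int (ell' x k)))
      = of_int (ell' x m) * Lpart x \<beta> m"
    unfolding Lpart_def sum_distrib_left by (intro sum.cong) auto
  moreover have "{1..<Suc m} = insert m {1..<m}" "{m<..<Suc m} = {}" using assms by auto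
  ultimately show ?thesis unfolding Lpart_def by simp
qed

lemma Lval_eq_Lpart: "of_int (Lval n gam i \<beta>) = Lpart (gcoord n gam i i) (\<lambda>j. of_int (\<beta> j)) (Suc n)"
proof -
  have "{1..<Suc n} = {1..n}" "\<And>j. {j<..<Suc n} = {j<..n}" by auto
  thus ?thesis unfolding Lval_def Lpart_def Lcoef_def
    by (simp add: of_int_sum of_int_mult of_int_prod mult_ac)
qed

lemma sum_ell_ep_Qinv:
  assumes "1 \<le> m" "m \<le> Suc n"
  shows "(\<Sum>j\<in>{1..<m}. of_int (ell x j * ep x j) * Qinv n x \<beta> j) = of_int (ep x m) * Lpart x \<beta> m"
  using assms
proof (induction m rule: dec_induct)
  case base thus ?case by (simp add: Lpart_def)
next
  case (step m)
  have m: "1 \<le> m" "m \<le> n" using step by auto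
  have "{1..<Suc m} = insert m {1..<m}" using m by auto
  hence "(\<Sum>j\<in>{1..<Suc m}. of_int (ell x j * ep x j) * Qinv n x \<beta> j)
      = of_int (ep x m) * Lpart x \<beta> m + of_int (ell x m * ep x m) * Qinv n x \<beta> m"
    using step m by simp
  also have "\<dots> = of_int (ep x (Suc m)) * Lpart x \<beta> (Suc m)"
    unfolding Lpart_Suc[OF m(1)] ep_Suc_rat[OF m(1)] Qinv_def
    using m dd_pos[OF m(1), of x] ell_bezout_rat[OF m(1), of x] by (simp add: field_simps)
  finally show ?case .
qed

lemma Qm_row:
  assumes "m \<in> {1..n}"
  shows "(\<Sum>j\<in>{1..n}. Qm x m j * y j)
       = x m * (\<Sum>j\<in>{1..<m}. of_int (ell x j * ep x j) * y j) + of_int (dd x m) / of_int (ee x m) * y m"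
proof -
  have upper: "(\<Sum>j\<in>{m<..n}. Qm x m j * y j) = 0" by (rule sum.neutral) (auto simp: Qm_def)
  have lower: "(\<Sum>j\<in>{1..<m}. Qm x m j * y j) = x m * (\<Sum>j\<in>{1..<m}. of_int (ell x j * ep x j) * y j)"
    unfolding sum_distrib_left by (rule sum.cong) (auto simp: Qm_def)
  show ?thesis
    unfolding sum_atLeastAtMost_split_at[OF assms, of "\<lambda>j. Qm x m j * y j"] upper lower
    by (simp add: Qm_def)
qed

lemma Qm_Qinv:
  assumes "m \<in> {1..n}"
  shows "(\<Sum>j\<in>{1..n}. Qm x m j * Qinv n x \<beta> j) = \<beta> m"
proof -
  have m: "1 \<le> m" "m \<le> Suc n" using assms by auto
  have back_subst: "e \<noteq> 0 \<Longrightarrow> d \<noteq> 0 \<Longrightarrow> h / e * (E * S) + d / e * ((e * b - h * E * S) / d) = b"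
    for e d h E S b :: rat
    by (simp add: field_simps)
  have "Qinv n x \<beta> m
      = (of_int (ee x m) * \<beta> m - of_int (hh x m) * of_int (ep x m) * Lpart x \<beta> m) / of_int (dd x m)"
    using assms by (simp add: Qinv_def)
  thus ?thesis
    unfolding Qm_row[OF assms] sum_ell_ep_Qinv[OF m] coord_eq_hh_div_ee[of x m]
    by (rule ssubst, intro back_subst) (use dd_pos[OF m(1), of x] ee_pos[of x m] in simp_all)
qed

lemma Qm_eq_0_imp_eq_0:
  assumes "\<forall>m\<in>{1..n}. (\<Sum>j\<in>{1..n}. Qm x m j * z j) = 0" "m \<in> {1..n}"
  shows "z m = 0"
  using assms(2)
proof (induction m rule: less_induct)
  case (less m)
  have "(\<Sum>j\<in>{1..<m}. of_int (ell x j * ep x j) * z j) = 0"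
    using less by (intro sum.neutral) auto
  moreover have "(\<Sum>j\<in>{1..n}. Qm x m j * z j) = 0" using assms(1) less.prems by blast
  ultimately have "of_int (dd x m) / of_int (ee x m) * z m = 0"
    unfolding Qm_row[OF less.prems] by simp
  moreover have "0 < dd x m" using less.prems by (simp add: dd_pos)
  ultimately show "z m = 0" using ee_pos[of x m] by simp
qed

lemma Qm_solution_eq_Qinv:
  assumes "\<forall>m\<in>{1..n}. (\<Sum>j\<in>{1..n}. Qm x m j * y j) = \<beta> m" "j \<in> {1..n}"
  shows "y j = Qinv n x \<beta> j"
proof -
  have "\<forall>m\<in>{1..n}. (\<Sum>j\<in>{1..n}. Qm x m j * (y j - Qinv n x \<beta> j)) = 0"
    using assms(1) Qm_Qinv by (simp add: right_diff_distrib sum_subtractf)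
  thus ?thesis using Qm_eq_0_imp_eq_0 assms(2) by fastforce
qed

lemma lsolve_Qm_eq_Qinv: "lsolve n (Qm x) \<beta> = Qinv n x \<beta>"
  unfolding lsolve_def
proof (rule the_equality)
  fix y assume y: "(\<forall>m\<in>{1..n}. (\<Sum>j\<in>{1..n}. Qm x m j * y j) = \<beta> m) \<and> (\<forall>j. j \<notin> {1..n} \<longrightarrow> y j = 0)"
  show "y = Qinv n x \<beta>"
  proof
    fix j
    show "y j = Qinv n x \<beta> j"
      using Qm_solution_eq_Qinv[of n x y \<beta> j] Qinv_eq_0[of j n x \<beta>] y by metis
  qed
next
  show "(\<forall>m\<in>{1..n}. (\<Sum>j\<in>{1..n}. Qm x m j * Qinv n x \<beta> j) = \<beta> m)
      \<and> (\<forall>j. j \<notin> {1..n} \<longrightarrow> Qinv n x \<beta> j = 0)"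
    using Qm_Qinv Qinv_eq_0 by blast
qed

lemma Qinv_linear: "Qinv n x (\<lambda>j. u j + c * w j) = (\<lambda>j. Qinv n x u j + c * Qinv n x w j)"
proof
  fix j
  have split: "(\<Sum>j\<in>{1..n}. Qm x m j * (Qinv n x u j + c * Qinv n x w j))
      = (\<Sum>j\<in>{1..n}. Qm x m j * Qinv n x u j) + c * (\<Sum>j\<in>{1..n}. Qm x m j * Qinv n x w j)" for m
    by (simp add: distrib_left sum.distrib sum_distrib_left mult.left_commute[of _ c])
  have sol: "\<forall>m\<in>{1..n}. (\<Sum>j\<in>{1..n}. Qm x m j * (Qinv n x u j + c * Qinv n x w j)) = u m + c * w m"
    unfolding split using Qm_Qinv[of _ n x u] Qm_Qinv[of _ n x w] by simp
  show "Qinv n x (\<lambda>j. u j + c * w j) j = Qinv n x u j + c * Qinv n x w j"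
  proof (cases "j \<in> {1..n}")
    case True
    show ?thesis using Qm_solution_eq_Qinv[OF sol True] by simp
  qed (simp add: Qinv_eq_0)
qed

section \<open>Integrality and the lattices \<open>\<Gamma>\<^sub>i\<^sub>-\<^sub>1\<close>\<close>

definition int_vec :: "nat \<Rightarrow> (nat \<Rightarrow> rat) \<Rightarrow> bool" where
  "int_vec n w \<longleftrightarrow> (\<forall>j\<in>{1..n}. w j \<in> \<int>)"

lemma Lpart_Ints: "\<forall>j\<in>{1..<m}. \<beta> j \<in> \<int> \<Longrightarrow> Lpart x \<beta> m \<in> \<int>"
  unfolding Lpart_def by (intro Ints_sum Ints_mult Ints_prod) auto

lemma Qinv_Ints:
  assumes "int_vec n \<beta>"
  shows "Qinv n x \<beta> m \<in> \<int>"
proof (cases "m \<in> {1..n}")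
  case True
  hence m: "1 \<le> m" by simp
  obtain e' where e': "ee x m = dd x m * e'" using dd_dvd_ee[OF m] by (metis dvdE)
  obtain E' where E': "ep x m = dd x m * E'" using dd_dvd_ep[OF m] by (metis dvdE)
  have "Lpart x \<beta> m \<in> \<int>" "\<beta> m \<in> \<int>"
    using assms True by (auto intro: Lpart_Ints simp: int_vec_def)
  moreover have "Qinv n x \<beta> m = of_int e' * \<beta> m - of_int (hh x m) * of_int E' * Lpart x \<beta> m"
    using True dd_pos[OF m, of x] by (simp add: Qinv_def e' E' field_simps)
  ultimately show ?thesis by simp
qed (simp add: Qinv_eq_0)

lemma one_minus_ep_Lpart_self:
  assumes "1 \<le> m" "m \<le> Suc n"
  shows "1 - of_int (ep x m) * Lpart x x m = of_int (ep x m) * (\<Prod>k\<in>{1..<m}. of_int (ell' x k))"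
  using assms
proof (induction m rule: dec_induct)
  case base thus ?case by (simp add: Lpart_def)
next
  case (step m)
  have m: "1 \<le> m" using step by simp
  have step_identity: "\<lbrakk>e \<noteq> 0; d \<noteq> 0; d = a * h * E + b * e; 1 - E * S = E * P\<rbrakk>
      \<Longrightarrow> 1 - E * e / d * (b * S + a * (h / e)) = E * e / d * (b * P)" for E e d a h b S P :: rat
  proof -
    assume e: "e \<noteq> 0" and d: "d \<noteq> 0" and bez: "d = a * h * E + b * e" and IH: "1 - E * S = E * P"
    have "1 - E * e / d * (b * S + a * (h / e)) = (d - a * h * E - e * b * (E * S)) / d"
      using e d by (simp add: field_simps)
    also have "\<dots> = (b * e - e * b * (1 - E * P)) / d"
      unfolding IH[symmetric] bez by (simp add: algebra_simps)
    also have "\<dots> = E * e / d * (b * P)"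
      using d by (simp add: field_simps)
    finally show ?thesis .
  qed
  have "{1..<Suc m} = insert m {1..<m}" using m by auto
  hence "(\<Prod>k\<in>{1..<Suc m}. of_int (ell' x k) :: rat)
      = of_int (ell' x m) * (\<Prod>k\<in>{1..<m}. of_int (ell' x k))" by simp
  thus ?case
    unfolding Lpart_Suc[OF m] ep_Suc_rat[OF m] coord_eq_hh_div_ee[of x m]
    by (rule ssubst, intro step_identity)
      (use ee_pos[of x m] dd_pos[OF m, of x] ell_bezout_rat[OF m, of x] step in simp_all)
qed

lemma Qinv_self_Ints: "Qinv n x x m \<in> \<int>"
proof (cases "m \<in> {1..n}")
  case True
  hence m: "1 \<le> m" "m \<le> Suc n" by auto
  obtain E' where E': "ep x m = dd x m * E'" using dd_dvd_ep[OF m(1)] by (metis dvdE)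
  have "Qinv n x x m = of_int (hh x m) * (1 - of_int (ep x m) * Lpart x x m) / of_int (dd x m)"
    using True ee_pos[of x m] by (simp add: Qinv_def coord_eq_hh_div_ee[of x m] field_simps)
  also have "\<dots> = of_int (hh x m) * of_int E' * (\<Prod>k\<in>{1..<m}. of_int (ell' x k))"
    unfolding one_minus_ep_Lpart_self[OF m] using dd_pos[OF m(1), of x] by (simp add: E')
  finally show ?thesis by (auto intro!: Ints_mult Ints_prod)
qed (simp add: Qinv_eq_0)

lemma ell_ep_mult_coord_Ints:
  assumes "1 \<le> m" "m < j"
  shows "of_int (ell x j * ep x j) * x m \<in> \<int>"
proof -
  obtain q where q: "ep x j = ee x m * q" using ee_dvd_ep[OF assms] by (auto elim: dvdE)
  have "of_int (ell x j * ep x j) * x m = (of_int (ell x j * q * hh x m) :: rat)"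
    using ee_pos[of x m] by (simp add: coord_eq_hh_div_ee[of x m] q field_simps)
  thus ?thesis by (metis Ints_of_int)
qed

text \<open>In the basis \<open>\<iota>\<^sub>i\<^sub>+\<^sub>1\<close>, a vector \<open>w\<close> given in the basis \<open>\<iota>\<^sub>i\<close> has integral coordinates
iff it lies in \<open>\<int>\<^sup>n + \<int> \<gamma>\<^sub>i\<close>: the \<open>\<iota>\<^sub>i\<^sub>+\<^sub>1\<^sub>,\<^sub>j\<close> span \<open>\<Gamma>\<^sub>i\<close>.\<close>

lemma int_vec_Qinv_iff: "int_vec n (Qinv n x w) \<longleftrightarrow> (\<exists>t::int. int_vec n (\<lambda>j. w j - of_int t * x j))"
proof
  assume y_int: "int_vec n (Qinv n x w)"
  define y where "y = Qinv n x w"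
  have "(\<Sum>j\<in>{1..n}. of_int (ell x j * ep x j) * y j) \<in> \<int>"
    using y_int unfolding y_def int_vec_def by (intro Ints_sum Ints_mult) auto
  then obtain t where t: "(\<Sum>j\<in>{1..n}. of_int (ell x j * ep x j) * y j) = of_int t"
    by (auto elim: Ints_cases)
  have "w m - of_int t * x m \<in> \<int>" if m: "m \<in> {1..n}" for m
  proof -
    have "w m = (\<Sum>j\<in>{1..n}. Qm x m j * y j)" unfolding y_def using Qm_Qinv[OF m] by simp
    also have "\<dots> = of_int (ell' x m) * y m + x m * of_int t
        - x m * (\<Sum>j\<in>{m<..n}. of_int (ell x j * ep x j) * y j)"
      using m unfolding Qm_row[OF m] t[symmetric] sum_atLeastAtMost_split_at[OF m]
      by (simp add: dd_div_ee_eq algebra_simps)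
    finally have "w m - of_int t * x m
        = of_int (ell' x m) * y m - (\<Sum>j\<in>{m<..n}. (of_int (ell x j * ep x j) * x m) * y j)"
      by (simp add: sum_distrib_left algebra_simps)
    moreover have "(\<Sum>j\<in>{m<..n}. (of_int (ell x j * ep x j) * x m) * y j) \<in> \<int>"
    proof (rule Ints_sum)
      fix j assume j: "j \<in> {m<..n}"
      hence "j \<in> {1..n}" using m by simp
      hence "y j \<in> \<int>" using y_int unfolding y_def int_vec_def by blast
      moreover have "of_int (ell x j * ep x j) * x m \<in> \<int>"
        by (rule ell_ep_mult_coord_Ints) (use m j in simp_all)
      ultimately show "(of_int (ell x j * ep x j) * x m) * y j \<in> \<int>" by (rule Ints_mult[rotated])
    qed
    moreover have "y m \<in> \<int>" using y_int m unfolding y_def int_vec_def by auto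
    ultimately show ?thesis by simp
  qed
  thus "\<exists>t::int. int_vec n (\<lambda>j. w j - of_int t * x j)" unfolding int_vec_def by blast
next
  assume "\<exists>t::int. int_vec n (\<lambda>j. w j - of_int t * x j)"
  then obtain t :: int where t: "int_vec n (\<lambda>j. w j - of_int t * x j)" by blast
  have "Qinv n x w = (\<lambda>j. Qinv n x (\<lambda>j. w j - of_int t * x j) j + of_int t * Qinv n x x j)"
    using Qinv_linear[of n x "\<lambda>j. w j - of_int t * x j" "of_int t" x] by simp
  thus "int_vec n (Qinv n x w)" unfolding int_vec_def
    using Qinv_Ints[OF t, of x] Qinv_self_Ints[of n x] by simp
qed

text \<open>\<open>iota_coords n gam i v\<close> is the coordinate vector, in the basis \<open>\<iota>\<^sub>i\<^sub>,\<^sub>.\<close>, of the element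
of \<open>\<Gamma>\<^sub>-\<^sub>1 \<otimes> \<rat>\<close> with \<open>\<iota>\<^sub>0\<^sub>,\<^sub>.\<close>-coordinates \<open>v\<close>.\<close>

fun iota_coords :: "nat \<Rightarrow> (nat \<Rightarrow> nat \<Rightarrow> rat) \<Rightarrow> nat \<Rightarrow> (nat \<Rightarrow> rat) \<Rightarrow> nat \<Rightarrow> rat" where
  "iota_coords n gam 0 v = (\<lambda>j. if j \<in> {1..n} then v j else 0)"
| "iota_coords n gam (Suc i) v = Qinv n (gcoord n gam i i) (iota_coords n gam i v)"

lemma gcoord_eq_iota_coords: "gcoord n gam i k = iota_coords n gam i (gam k)"
  by (induction i arbitrary: k) (auto simp: lsolve_Qm_eq_Qinv)

lemma iota_coords_linear:
  "iota_coords n gam i (\<lambda>j. u j + c * w j) = (\<lambda>j. iota_coords n gam i u j + c * iota_coords n gam i w j)"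
  by (induction i) (auto simp: Qinv_linear)

lemma iota_coords_smult: "iota_coords n gam i (\<lambda>j. c * w j) = (\<lambda>j. c * iota_coords n gam i w j)"
proof -
  have "iota_coords n gam i (\<lambda>_. 0) = (\<lambda>_. 0)"
    by (induction i) (auto simp: Qinv_def Lpart_def)
  thus ?thesis using iota_coords_linear[of n gam i "\<lambda>_. 0" c w] by simp
qed

lemma inLat_0_iff: "inLat n gam 0 v \<longleftrightarrow> int_vec n v"
proof
  assume "int_vec n v"
  hence "\<forall>j\<in>{1..n}. \<exists>a::int. v j = of_int a" by (auto simp: int_vec_def elim: Ints_cases)
  then obtain a where "\<forall>j\<in>{1..n}. v j = of_int (a j)" by metis
  thus "inLat n gam 0 v" unfolding inLat_def by auto
qed (auto simp: inLat_def int_vec_def)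

lemma inLat_Suc_iff:
  "inLat n gam (Suc i) v \<longleftrightarrow> (\<exists>t::int. inLat n gam i (\<lambda>j. v j - of_int t * gam i j))"
proof
  assume "inLat n gam (Suc i) v"
  then obtain a b :: "nat \<Rightarrow> int"
    where "\<forall>j\<in>{1..n}. v j = of_int (a j) + (\<Sum>l<Suc i. of_int (b l) * gam l j)"
    by (auto simp: inLat_def)
  hence "\<forall>j\<in>{1..n}. v j - of_int (b i) * gam i j = of_int (a j) + (\<Sum>l<i. of_int (b l) * gam l j)"
    by simp
  thus "\<exists>t::int. inLat n gam i (\<lambda>j. v j - of_int t * gam i j)" unfolding inLat_def by blast
next
  assume "\<exists>t::int. inLat n gam i (\<lambda>j. v j - of_int t * gam i j)"
  then obtain t :: int and a b :: "nat \<Rightarrow> int"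
    where ab: "\<forall>j\<in>{1..n}. v j - of_int t * gam i j = of_int (a j) + (\<Sum>l<i. of_int (b l) * gam l j)"
    by (auto simp: inLat_def)
  have "(\<Sum>l<i. of_int ((b(i := t)) l) * gam l j) = (\<Sum>l<i. of_int (b l) * gam l j)" for j
    by (rule sum.cong) auto
  hence "\<forall>j\<in>{1..n}. v j = of_int (a j) + (\<Sum>l<Suc i. of_int ((b(i := t)) l) * gam l j)"
    using ab by (simp add: algebra_simps)
  thus "inLat n gam (Suc i) v" unfolding inLat_def by blast
qed

theorem inLat_iff_int_vec_iota_coords: "inLat n gam i v \<longleftrightarrow> int_vec n (iota_coords n gam i v)"
proof (induction i arbitrary: v)
  case 0
  show ?case unfolding inLat_0_iff int_vec_def by simp
next
  case (Suc i)
  have "inLat n gam (Suc i) v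
      \<longleftrightarrow> (\<exists>t::int. int_vec n (iota_coords n gam i (\<lambda>j. v j + (- of_int t) * gam i j)))"
    unfolding inLat_Suc_iff Suc.IH by simp
  also have "\<dots> \<longleftrightarrow> (\<exists>t::int. int_vec n (\<lambda>j. iota_coords n gam i v j - of_int t * gcoord n gam i i j))"
    unfolding iota_coords_linear gcoord_eq_iota_coords by simp
  also have "\<dots> \<longleftrightarrow> int_vec n (iota_coords n gam (Suc i) v)"
    by (simp add: int_vec_Qinv_iff)
  finally show ?case .
qed

section \<open>The ramification index \<open>e\<^sub>i\<close>\<close>

lemma of_int_mult_frac_Ints_iff:
  fixes h e k :: int
  assumes "0 < e" "coprime h e"
  shows "(of_int k * (of_int h / of_int e) :: rat) \<in> \<int> \<longleftrightarrow> e dvd k"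
proof
  assume "of_int k * (of_int h / of_int e) \<in> (\<int> :: rat set)"
  then obtain z where "of_int k * (of_int h / of_int e) = (of_int z :: rat)" by (auto elim: Ints_cases)
  hence "(of_int (k * h) :: rat) = of_int (z * e)" using assms(1) by (simp add: field_simps)
  hence "e dvd k * h" by (metis dvd_triv_right of_int_eq_iff)
  thus "e dvd k" using assms(2) by (simp add: coprime_commute coprime_dvd_mult_left_iff)
qed (use assms(1) in auto)

theorem eidx_eq_ep: "eidx n gam i = nat (ep (gcoord n gam i i) (Suc n))"
proof -
  define x where "x = gcoord n gam i i"
  have "inLat n gam i (\<lambda>j. of_nat k * gam i j) \<longleftrightarrow> int_vec n (\<lambda>j. of_nat k * x j)" for k
    unfolding inLat_iff_int_vec_iota_coords iota_coords_smult x_def gcoord_eq_iota_coords ..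
  also have "\<dots> k \<longleftrightarrow> (\<forall>j\<in>{1..n}. ee x j dvd int k)" for k
  proof -
    have "of_nat k * x j \<in> \<int> \<longleftrightarrow> ee x j dvd int k" for j
      using of_int_mult_frac_Ints_iff[OF ee_pos[of x j] hh_ee_coprime[of x j], of "int k"]
      unfolding coord_eq_hh_div_ee[of x j] by simp
    thus ?thesis unfolding int_vec_def by simp
  qed
  also have "\<dots> k \<longleftrightarrow> ep x (Suc n) dvd int k" for k
    using ep_dvd_iff[of "Suc n" x "int k"] by (simp add: atLeastLessThanSuc_atLeastAtMost)
  finally have lattice_iff: "inLat n gam i (\<lambda>j. of_nat k * gam i j) \<longleftrightarrow> ep x (Suc n) dvd int k" for k .
  have E: "0 < ep x (Suc n)" by (rule ep_pos) simp
  show ?thesis unfolding eidx_def x_def[symmetric] lattice_iff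
  proof (rule Least_equality)
    fix k assume "0 < k \<and> ep x (Suc n) dvd int k"
    thus "nat (ep x (Suc n)) \<le> k" using zdvd_imp_le[of "ep x (Suc n)" "int k"] by simp
  qed (use E in simp)
qed

section \<open>Laurent monomials in \<open>\<phi>\<^sub>i\<close> and \<open>\<pi>\<^sub>i\<^sub>,\<^sub>1, \<dots>, \<pi>\<^sub>i\<^sub>,\<^sub>n\<close>\<close>

definition lmonom :: "nat \<Rightarrow> 'a::field \<Rightarrow> (nat \<Rightarrow> 'a) \<Rightarrow> int \<Rightarrow> (nat \<Rightarrow> int) \<Rightarrow> 'a" where
  "lmonom n f p c g = f powi c * (\<Prod>l\<in>{1..n}. p l powi g l)"

context
  fixes n :: nat and f :: "'a::field" and p :: "nat \<Rightarrow> 'a"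
  assumes f: "f \<noteq> 0" and p: "\<forall>l\<in>{1..n}. p l \<noteq> 0"
begin

lemma lmonom_nonzero: "lmonom n f p c g \<noteq> 0"
  using f p by (auto simp: lmonom_def power_int_not_zero)

lemma lmonom_mult: "lmonom n f p c g * lmonom n f p c' g' = lmonom n f p (c + c') (\<lambda>l. g l + g' l)"
proof -
  have "(\<Prod>l\<in>{1..n}. p l powi (g l + g' l)) = (\<Prod>l\<in>{1..n}. p l powi g l * p l powi g' l)"
    using p by (intro prod.cong) (auto simp: power_int_add)
  thus ?thesis using f by (simp add: lmonom_def power_int_add prod.distrib algebra_simps)
qed

lemma lmonom_prod:
  "finite A \<Longrightarrow> (\<Prod>j\<in>A. lmonom n f p (c j) (g j)) = lmonom n f p (\<Sum>j\<in>A. c j) (\<lambda>l. \<Sum>j\<in>A. g j l)"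
  by (induction A rule: finite_induct) (simp_all add: lmonom_mult, simp add: lmonom_def)

lemma lmonom_divide:
  "lmonom n f p c g / lmonom n f p c' g' = lmonom n f p (c - c') (\<lambda>l. g l - g' l)"
proof -
  have "lmonom n f p (c - c') (\<lambda>l. g l - g' l) * lmonom n f p c' g' = lmonom n f p c g"
    by (simp add: lmonom_mult)
  thus ?thesis using lmonom_nonzero by (simp add: field_simps)
qed

end

lemma lmonom_power_int: "lmonom n f p c g powi k = lmonom n f p (c * k) (\<lambda>l. g l * k)"
  by (simp add: lmonom_def power_int_mult_distrib prod_power_int_distrib power_int_mult)

lemma lmonom_cong: "c = c' \<Longrightarrow> \<forall>l\<in>{1..n}. g l = g' l \<Longrightarrow> lmonom n f p c g = lmonom n f p c' g'"
  by (simp add: lmonom_def)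

lemma piv_nonzero:
  assumes "\<forall>k<i. phi k \<noteq> 0" "\<forall>l\<in>{1..n}. p0 l \<noteq> 0" "l \<in> {1..n}"
  shows "piv n gam phi p0 i l \<noteq> 0"
  using assms
proof (induction i arbitrary: l)
  case (Suc i)
  hence "(\<Prod>m\<in>{1..<l}. piv n gam phi p0 i m powi e m) \<noteq> 0" for e
    by (subst prod_zero_iff) (auto simp: power_int_not_zero)
  thus ?case using Suc by (simp add: Let_def power_int_not_zero)
qed simp

text \<open>\<open>pi_exp x j l\<close> is the exponent of \<open>\<pi>\<^sub>i\<^sub>,\<^sub>l\<close> in \<open>\<pi>\<^sub>i\<^sub>+\<^sub>1\<^sub>,\<^sub>j\<close>.\<close>

definition pi_exp :: "(nat \<Rightarrow> rat) \<Rightarrow> nat \<Rightarrow> nat \<Rightarrow> int" where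
  "pi_exp x j l =
    (if l < j then - (ell x j * ep x j * hh x l div ee x l) else if l = j then ell' x j else 0)"

lemma piv_Suc_eq_lmonom:
  fixes gam :: "nat \<Rightarrow> nat \<Rightarrow> rat" and i :: nat
  assumes "j \<in> {1..n}"
  defines "x \<equiv> gcoord n gam i i"
  shows "piv n gam phi p0 (Suc i) j
           = lmonom n (phi i) (piv n gam phi p0 i) (ell x j * ep x j) (pi_exp x j)"
proof -
  let ?p = "piv n gam phi p0 i"
  have "(\<Prod>l\<in>{j<..n}. ?p l powi pi_exp x j l) = 1"
    by (rule prod.neutral) (auto simp: pi_exp_def)
  moreover have "(\<Prod>l\<in>{1..<j}. ?p l powi pi_exp x j l)
      = (\<Prod>l\<in>{1..<j}. ?p l powi (- (ell x j * ep x j * hh x l div ee x l)))"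
    by (rule prod.cong) (auto simp: pi_exp_def)
  ultimately show ?thesis
    unfolding lmonom_def prod_atLeastAtMost_split_at[OF assms(1)]
    by (simp add: x_def Let_def pi_exp_def mult.assoc)
qed

lemma pipow_Suc_eq_lmonom:
  fixes gam :: "nat \<Rightarrow> nat \<Rightarrow> rat"
  assumes "\<forall>k\<le>i. phi k \<noteq> 0" "\<forall>j\<in>{1..n}. p0 j \<noteq> 0"
  defines "x \<equiv> gcoord n gam i i"
  shows "pipow n gam phi p0 (Suc i) \<beta>' = lmonom n (phi i) (piv n gam phi p0 i)
           (\<Sum>j\<in>{1..n}. ell x j * ep x j * \<beta>' j) (\<lambda>l. \<Sum>j\<in>{1..n}. pi_exp x j l * \<beta>' j)"
proof -
  have "pipow n gam phi p0 (Suc i) \<beta>'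
      = (\<Prod>j\<in>{1..n}. lmonom n (phi i) (piv n gam phi p0 i) (ell x j * ep x j * \<beta>' j) (\<lambda>l. pi_exp x j l * \<beta>' j))"
    unfolding pipow_def x_def
  proof (rule prod.cong)
    fix j assume "j \<in> {1..n}"
    thus "piv n gam phi p0 (Suc i) j powi \<beta>' j = lmonom n (phi i) (piv n gam phi p0 i)
        (ell (gcoord n gam i i) j * ep (gcoord n gam i i) j * \<beta>' j) (\<lambda>l. pi_exp (gcoord n gam i i) j l * \<beta>' j)"
      by (simp only: piv_Suc_eq_lmonom lmonom_power_int)
  qed simp
  also have "\<dots> = lmonom n (phi i) (piv n gam phi p0 i)
           (\<Sum>j\<in>{1..n}. ell x j * ep x j * \<beta>' j) (\<lambda>l. \<Sum>j\<in>{1..n}. pi_exp x j l * \<beta>' j)"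
  proof (rule lmonom_prod)
    show "phi i \<noteq> 0" using assms(1) by simp
    show "\<forall>l\<in>{1..n}. piv n gam phi p0 i l \<noteq> 0" using assms(1,2) by (intro ballI piv_nonzero) auto
  qed simp
  finally show ?thesis .
qed

lemma Yv_eq_lmonom:
  fixes gam :: "nat \<Rightarrow> nat \<Rightarrow> rat" and n i :: nat
  defines "x \<equiv> gcoord n gam i i"
  shows "Yv n gam phi p0 i = lmonom n (phi i) (piv n gam phi p0 i)
           (ep x (Suc n)) (\<lambda>l. - (ep x (Suc n) * hh x l div ee x l))"
proof -
  have "int (eidx n gam i) = ep x (Suc n)"
    using ep_pos[of "Suc n" x] by (simp add: eidx_eq_ep x_def)
  thus ?thesis unfolding Yv_def lmonom_def pipow_def Let_def x_def by simp
qed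

section \<open>Comparison of exponents\<close>

lemma sum_ell_ep_Qm_solution:
  assumes "\<forall>m\<in>{1..n}. (\<Sum>j\<in>{1..n}. Qm x m j * y j) = \<beta> m"
  shows "(\<Sum>j\<in>{1..n}. of_int (ell x j * ep x j) * y j) = of_int (ep x (Suc n)) * Lpart x \<beta> (Suc n)"
proof -
  have "(\<Sum>j\<in>{1..n}. of_int (ell x j * ep x j) * y j)
      = (\<Sum>j\<in>{1..<Suc n}. of_int (ell x j * ep x j) * Qinv n x \<beta> j)"
    using Qm_solution_eq_Qinv[OF assms] by (intro sum.cong) auto
  also have "\<dots> = of_int (ep x (Suc n)) * Lpart x \<beta> (Suc n)"
    by (rule sum_ell_ep_Qinv) simp_all
  finally show ?thesis .
qed

lemma sum_pi_exp_Qm_solution: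
  assumes sol: "\<forall>m\<in>{1..n}. (\<Sum>j\<in>{1..n}. Qm x m j * y j) = \<beta> m" and l: "l \<in> {1..n}"
  shows "(\<Sum>j\<in>{1..n}. of_int (pi_exp x j l) * y j) - \<beta> l
       = - x l * (\<Sum>j\<in>{1..n}. of_int (ell x j * ep x j) * y j)"
proof -
  let ?A = "\<lambda>j. of_int (ell x j * ep x j) * y j"
  have "(\<Sum>j\<in>{1..<l}. of_int (pi_exp x j l) * y j) = 0"
    by (rule sum.neutral) (auto simp: pi_exp_def)
  moreover have "(\<Sum>j\<in>{l<..n}. of_int (pi_exp x j l) * y j) = - (x l * (\<Sum>j\<in>{l<..n}. ?A j))"
    unfolding sum_distrib_left sum_negf[symmetric]
  proof (rule sum.cong)
    fix j assume j: "j \<in> {l<..n}"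
    have "ee x l dvd ell x j * ep x j" using ee_dvd_ep[of l j x] l j by (auto intro: dvd_mult)
    thus "of_int (pi_exp x j l) * y j = - (x l * ?A j)"
      using j by (simp add: pi_exp_def of_int_mult_hh_div_ee)
  qed simp
  moreover have "\<beta> l = (\<Sum>j\<in>{1..n}. Qm x l j * y j)" using sol l by simp
  moreover have "1 \<le> l" using l by simp
  ultimately show ?thesis
    unfolding Qm_row[OF l] sum_atLeastAtMost_split_at[OF l, of "\<lambda>j. of_int (pi_exp x j l) * y j"]
      sum_atLeastAtMost_split_at[OF l, of ?A] dd_div_ee_eq[OF \<open>1 \<le> l\<close>]
    by (simp add: pi_exp_def algebra_simps)
qed

theorem pipow_Suc_div_pipow_eq_Yv_power_int:
  fixes phi p0 :: "nat \<Rightarrow> 'a::field" and \<beta> \<beta>' :: "nat \<Rightarrow> int"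
  assumes phi: "\<forall>k\<le>i. phi k \<noteq> 0" and p0: "\<forall>j\<in>{1..n}. p0 j \<noteq> 0"
    and sol: "\<forall>m\<in>{1..n}. (\<Sum>j\<in>{1..n}. Qm (gcoord n gam i i) m j * of_int (\<beta>' j)) = of_int (\<beta> m)"
  shows "pipow n gam phi p0 (Suc i) \<beta>' / pipow n gam phi p0 i \<beta>
           = Yv n gam phi p0 i powi Lval n gam i \<beta>"
proof -
  define x where "x = gcoord n gam i i"
  define E where "E = ep x (Suc n)"
  define L where "L = Lval n gam i \<beta>"
  have sol_x: "\<forall>m\<in>{1..n}. (\<Sum>j\<in>{1..n}. Qm x m j * of_int (\<beta>' j)) = (of_int (\<beta> m) :: rat)"
    using sol by (simp add: x_def)
  have "(\<Sum>j\<in>{1..n}. of_int (ell x j * ep x j) * of_int (\<beta>' j))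
      = of_int E * Lpart x (\<lambda>j. of_int (\<beta> j)) (Suc n)"
    unfolding E_def by (rule sum_ell_ep_Qm_solution[OF sol_x])
  also have "Lpart x (\<lambda>j. of_int (\<beta> j)) (Suc n) = of_int L"
    unfolding L_def x_def by (rule Lval_eq_Lpart[symmetric])
  finally have phi_exp_rat:
    "(\<Sum>j\<in>{1..n}. of_int (ell x j * ep x j) * of_int (\<beta>' j)) = (of_int E * of_int L :: rat)" .
  hence "of_int (\<Sum>j\<in>{1..n}. ell x j * ep x j * \<beta>' j) = (of_int (E * L) :: rat)" by simp
  hence phi_exp: "(\<Sum>j\<in>{1..n}. ell x j * ep x j * \<beta>' j) - 0 = E * L" by (simp only: of_int_eq_iff)
  have pi_exp: "(\<Sum>j\<in>{1..n}. pi_exp x j l * \<beta>' j) - \<beta> l = - (E * hh x l div ee x l) * L"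
    if l: "l \<in> {1..n}" for l
  proof -
    have "(of_int ((\<Sum>j\<in>{1..n}. pi_exp x j l * \<beta>' j) - \<beta> l) :: rat) = - x l * (of_int E * of_int L)"
      using sum_pi_exp_Qm_solution[OF sol_x l] phi_exp_rat by simp
    also have "\<dots> = of_int (- (E * hh x l div ee x l) * L)"
      using of_int_mult_hh_div_ee[OF ee_dvd_ep, of l "Suc n" x] l by (simp add: E_def)
    finally show ?thesis by (simp only: of_int_eq_iff)
  qed
  have phi_i: "phi i \<noteq> 0" using phi by simp
  have piv_i: "\<forall>l\<in>{1..n}. piv n gam phi p0 i l \<noteq> 0"
    using phi p0 by (intro ballI piv_nonzero) auto
  have pipow_i: "pipow n gam phi p0 i \<beta> = lmonom n (phi i) (piv n gam phi p0 i) 0 \<beta>"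
    by (simp add: pipow_def lmonom_def)
  show ?thesis
    unfolding pipow_Suc_eq_lmonom[OF phi p0] pipow_i Yv_eq_lmonom lmonom_power_int
      x_def[symmetric] E_def[symmetric] L_def[symmetric] lmonom_divide[OF phi_i piv_i]
    by (intro lmonom_cong) (use phi_exp pi_exp in auto)
qed

corollary ex_int_coords_pipow_Suc_div_pipow:
  fixes phi p0 :: "nat \<Rightarrow> 'a::field" and \<beta> :: "nat \<Rightarrow> int"
  assumes phi: "\<forall>k\<le>i. phi k \<noteq> 0" and p0: "\<forall>j\<in>{1..n}. p0 j \<noteq> 0"
  shows "\<exists>\<beta>' :: nat \<Rightarrow> int.
           (\<forall>m\<in>{1..n}. (\<Sum>j\<in>{1..n}. Qm (gcoord n gam i i) m j * of_int (\<beta>' j)) = of_int (\<beta> m))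
         \<and> pipow n gam phi p0 (Suc i) \<beta>' / pipow n gam phi p0 i \<beta> = Yv n gam phi p0 i powi Lval n gam i \<beta>"
proof -
  define y where "y = Qinv n (gcoord n gam i i) (\<lambda>j. of_int (\<beta> j))"
  have "y j \<in> \<int>" for j unfolding y_def by (rule Qinv_Ints) (simp add: int_vec_def)
  hence y_int: "of_int \<lfloor>y j\<rfloor> = y j" for j by (auto elim: Ints_cases)
  have "\<forall>m\<in>{1..n}. (\<Sum>j\<in>{1..n}. Qm (gcoord n gam i i) m j * y j) = of_int (\<beta> m)"
    unfolding y_def using Qm_Qinv by blast
  hence sol: "\<forall>m\<in>{1..n}. (\<Sum>j\<in>{1..n}. Qm (gcoord n gam i i) m j * of_int \<lfloor>y j\<rfloor>) = of_int (\<beta> m)"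
    by (simp only: y_int)
  show ?thesis
    by (intro exI[of _ "\<lambda>j. \<lfloor>y j\<rfloor>"] conjI sol pipow_Suc_div_pipow_eq_Yv_power_int[OF phi p0 sol])
qed

lemma Fract_1_nonzero: "p \<noteq> 0 \<Longrightarrow> Fract p 1 \<noteq> 0"
  by (simp add: Zero_fract_def eq_fract)

theorem mainTheorem7:
  fixes n r :: nat
    and gam :: "nat \<Rightarrow> nat \<Rightarrow> rat"
    and phi :: "nat \<Rightarrow> 'a::field poly"
    and c0 :: "nat \<Rightarrow> 'a"
  assumes "\<forall>i\<le>r. lead_coeff (phi i) = 1"
    and "\<forall>j\<in>{1..n}. c0 j \<noteq> 0"
  shows "\<forall>i\<le>r. \<forall>\<beta> :: nat \<Rightarrow> int. \<exists>\<beta>' :: nat \<Rightarrow> int.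
           (\<forall>m\<in>{1..n}. (\<Sum>j\<in>{1..n}. Qm (gcoord n gam i i) m j * of_int (\<beta>' j)) = of_int (\<beta> m))
         \<and> pipow n gam (\<lambda>k. Fract (phi k) 1) (\<lambda>j. Fract [:c0 j:] 1) (Suc i) \<beta>'
             / pipow n gam (\<lambda>k. Fract (phi k) 1) (\<lambda>j. Fract [:c0 j:] 1) i \<beta>
           = Yv n gam (\<lambda>k. Fract (phi k) 1) (\<lambda>j. Fract [:c0 j:] 1) i
               powi Lval n gam i \<beta>"
proof (intro allI impI ex_int_coords_pipow_Suc_div_pipow)
  fix i k assume "i \<le> r" "k \<le> i"
  hence "lead_coeff (phi k) = 1" using assms(1) by simp
  thus "Fract (phi k) 1 \<noteq> 0" by (intro Fract_1_nonzero) auto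
next
  show "\<forall>j\<in>{1..n}. Fract [:c0 j:] 1 \<noteq> 0" using assms(2) by (simp add: Fract_1_nonzero)
qed

end
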